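(* Let $\lambda_0\le0\le\lambda_1$ be real and $a<b$. Then for all $t\in[a,b]$, $$\Omega^{a,b}_{\lambda_0,\lambda_1,0}(t)\le(b-a)\left|G^{a,b}_{\lambda_0,\lambda_1}(t,t)\right|,\qquad G^{a,b}_{\lambda_0,\lambda_1}(t,t):=\frac{\Phi_{(\lambda_0,\lambda_1)}(t-b)\,\Phi_{(-\lambda_0,-\lambda_1)}(t-a)}{\Phi_{(-\lambda_0,-\lambda_1)}(b-a)}.$$
   Context: For real $\lambda_0,\dots,\lambda_N$, $L_{(\lambda_0,\dots,\lambda_N)}=\prod_{j=0}^N(\frac{d}{dt}-\lambda_j)$, $E(\lambda_0,\dots,\lambda_N)=\{f\in C^{N+1}(\mathbb{R}):L_{(\lambda_0,\dots,\lambda_N)}f=0\}$, and the fundamental function $\Phi_{(\lambda_0,\dots,\lambda_N)}$ is the unique element of $E(\lambda_0,\dots,\lambda_N)$ with $\Phi^{(k)}(0)=0$ for $0\le k\le N-1$ and $\Phi^{(N)}(0)=1$ (e.g. $\Phi_{(\lambda_0,\lambda_1)}(t)=\frac{e^{\lambda_1t}-e^{\lambda_0t}}{\lambda_1-\lambda_0}$ for $\lambda_0\ne\lambda_1$). For real $\lambda_0,\lambda_1$ and $a<b$, $\Omega^{a,b}_{\lambda_0,\lambda_1,0}$ is the unique $u\in E(\lambda_0,\lambda_1,0)$ with $u(a)=u(b)=0$ and $L_{(\lambda_0,\lambda_1)}u\equiv-1$. ($G^{a,b}_{\lambda_0,\lambda_1}(t,t)$ is the diagonal of the Green function of $L_{(\lambda_0,\lambda_1)}$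 on $[a,b]$ with zero boundary conditions.) *)

theory Defs
  imports "HOL-Analysis.Analysis"
begin

definition Lfac :: "real \<Rightarrow> (real \<Rightarrow> real) \<Rightarrow> (real \<Rightarrow> real)" where
  "Lfac l f = (\<lambda>t. deriv f t - l * f t)"

definition Lop :: "real list \<Rightarrow> (real \<Rightarrow> real) \<Rightarrow> (real \<Rightarrow> real)" where
  "Lop ls f = foldr Lfac ls f"

definition Cn :: "nat \<Rightarrow> (real \<Rightarrow> real) \<Rightarrow> bool" where
  "Cn n f \<longleftrightarrow> (\<forall>k<n. \<forall>t. ((deriv ^^ k) f) differentiable (at t))
                 \<and> continuous_on UNIV ((deriv ^^ n) f)"

text \<open>E(l0,...,lN) = {f in C^{N+1}(R). L f = 0}; here N+1 = length ls.\<close>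
definition Espace :: "real list \<Rightarrow> (real \<Rightarrow> real) set" where
  "Espace ls = {f. Cn (length ls) f \<and> (\<forall>t. Lop ls f t = 0)}"

definition Phi :: "real list \<Rightarrow> real \<Rightarrow> real" where
  "Phi ls = (THE f. f \<in> Espace ls \<and> (\<forall>k < length ls - 1. (deriv ^^ k) f 0 = 0)
                   \<and> (deriv ^^ (length ls - 1)) f 0 = 1)"

definition Omega :: "real \<Rightarrow> real \<Rightarrow> real \<Rightarrow> real \<Rightarrow> real \<Rightarrow> real" where
  "Omega l0 l1 a b = (THE u. u \<in> Espace [l0, l1, 0] \<and> u a = 0 \<and> u b = 0
                          \<and> (\<forall>t. Lop [l0, l1] u t = -1))"

definition Gdiag :: "real \<Rightarrow> real \<Rightarrow> real \<Rightarrow> real \<Rightarrow> real \<Rightarrow> real" where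
  "Gdiag l0 l1 a b t = Phi [l0, l1] (t - b) * Phi [-l0, -l1] (t - a) / Phi [-l0, -l1] (b - a)"

end

theory Submission
  imports Defs
begin

(*
  Write x = t - a, y = b - t, F = Phi_(-l0,-l1), and let Psi, Xi be the antiderivatives of F and
  Phi_(l0,l1) vanishing at 0. Variation of parameters with the homogeneous solutions
  Phi_(l0,l1)(t - b) and Phi_(l0,l1)(t - a) gives the closed form
    Omega(t) = (F y * Psi x + e^(-(l0+l1)(b-a)) * Phi_(l0,l1) x * Xi y) / F (b - a),
  whereas G(t,t) = - F x * F y / F (b - a). For l0 <= 0 <= l1 both fundamental functions are
  nondecreasing, so Psi x <= x * F x and Xi y <= y * Phi_(l0,l1) y. Since
  e^(-(l0+l1)(x+y)) * Phi_(l0,l1) x * Phi_(l0,l1) y = F x * F y, the numerator is therefore at most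
  (x + y) * F x * F y = (b - a) * F x * F y.
*)

definition fundamental :: "real \<Rightarrow> real \<Rightarrow> real \<Rightarrow> real" where
  "fundamental p q x =
     (if p = q then x * exp (p * x) else (exp (q * x) - exp (p * x)) / (q - p))"

definition fundamental' :: "real \<Rightarrow> real \<Rightarrow> real \<Rightarrow> real" where
  "fundamental' p q x = q * fundamental p q x + exp (p * x)"

lemma fundamental_0 [simp]: "fundamental p q 0 = 0"
  by (simp add: fundamental_def)

lemma fundamental_add:
  "fundamental p q (x + y) = exp (q * y) * fundamental p q x + exp (p * x) * fundamental p q y"
proof (cases "p = q")
  case False
  then have "q - p \<noteq> 0" by simp
  then show ?thesis
    using False
    by (simp add: fundamental_def distrib_left exp_add divide_simps) (simp add: algebra_simps)
qed (simp add: fundamental_def exp_add algebra_simps)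

lemma fundamental_uminus_params:
  "fundamental (-p) (-q) x = exp (-(p + q) * x) * fundamental p q x"
proof -
  have "exp (-(p + q) * x) * exp (q * x) = exp (- p * x)"
    and "exp (-(p + q) * x) * exp (p * x) = exp (- q * x)"
    by (simp_all add: mult_exp_exp algebra_simps)
  then show ?thesis
    by (cases "p = q") (auto simp: fundamental_def divide_simps algebra_simps)
qed

lemma fundamental_uminus_params_mult:
  "fundamental (-p) (-q) x * fundamental (-p) (-q) y
     = exp (-(p + q) * (x + y)) * fundamental p q x * fundamental p q y"
  by (simp add: fundamental_uminus_params distrib_left exp_add)

lemma fundamental_minus: "fundamental p q (-x) = - fundamental (-p) (-q) x"
  by (cases "p = q") (auto simp: fundamental_def divide_simps algebra_simps)

lemma fundamental_wronskian:
  "fundamental' p q (-y) * fundamental (-p) (-q) x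
     + exp (-(p + q) * (x + y)) * fundamental' p q x * fundamental p q y
   = fundamental (-p) (-q) (x + y)"
proof -
  have "fundamental' p q (-y) = exp (- (p * y)) - q * fundamental (-p) (-q) y"
    by (simp add: fundamental'_def fundamental_minus)
  moreover have "fundamental' p q x = q * fundamental p q x + exp (p * x)"
    by (rule fundamental'_def)
  moreover have "exp (- (p * y)) * exp (-(p + q) * x) = exp (-(p + q) * (x + y)) * exp (q * y)"
    by (simp add: algebra_simps flip: exp_add)
  moreover have "fundamental (-p) (-q) (x + y)
      = exp (-(p + q) * (x + y))
          * (exp (q * y) * fundamental p q x + exp (p * x) * fundamental p q y)"
    by (simp only: fundamental_uminus_params[of p q "x + y"] fundamental_add[of p q x y])
  ultimately show ?thesis
    using fundamental_uminus_params[of p q x] fundamental_uminus_params_mult[of p q x y] by algebra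
qed

lemma fundamental_pos:
  assumes "x > 0"
  shows "fundamental p q x > 0"
proof (cases p q rule: linorder_cases)
  case less
  then show ?thesis
    using assms by (simp add: fundamental_def)
next
  case greater
  then show ?thesis
    using assms by (simp add: fundamental_def divide_neg_neg)
qed (use assms in \<open>simp add: fundamental_def\<close>)

lemma fundamental_nonneg: "x \<ge> 0 \<Longrightarrow> fundamental p q x \<ge> 0"
  using fundamental_pos[of x p q] by (cases "x = 0") auto

lemma fundamental'_pos:
  assumes "p * q \<le> 0"
  shows "fundamental' p q x > 0"
proof (cases "p = q")
  case True
  then show ?thesis
    using assms by (auto simp: fundamental'_def fundamental_def mult_le_0_iff)
next
  case False
  have "q\<^sup>2 * exp (q * x) + p\<^sup>2 * exp (p * x) > 0"
    using False by (cases "q = 0") (auto intro: add_pos_nonneg add_nonneg_pos)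
  moreover have "p * q * (exp (q * x) + exp (p * x)) \<le> 0"
    by (rule mult_nonpos_nonneg[OF assms]) simp
  moreover have "(q * exp (q * x) - p * exp (p * x)) * (q - p)
      = q\<^sup>2 * exp (q * x) + p\<^sup>2 * exp (p * x) - (p * q) * (exp (q * x) + exp (p * x))"
    by (simp add: algebra_simps power2_eq_square)
  ultimately have "(q * exp (q * x) - p * exp (p * x)) * (q - p) > 0"
    by linarith
  then have "(q * exp (q * x) - p * exp (p * x)) / (q - p) > 0"
    by (simp add: zero_less_divide_iff zero_less_mult_iff)
  moreover have "(q * exp (q * x) - p * exp (p * x)) / (q - p) = fundamental' p q x"
    using False by (simp add: fundamental'_def fundamental_def divide_simps) (simp add: algebra_simps)
  ultimately show ?thesis
    by simp
qed

lemma DERIV_fundamental: "(fundamental p q has_real_derivative fundamental' p q x) (at x)"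
proof (cases "p = q")
  case True
  have "((\<lambda>x. x * exp (p * x)) has_real_derivative 1 * exp (p * x) + x * (exp (p * x) * p)) (at x)"
    by (auto intro!: derivative_eq_intros)
  then show ?thesis
    using True unfolding fundamental_def fundamental'_def by (simp add: algebra_simps)
next
  case False
  have "((\<lambda>x. (exp (q * x) - exp (p * x)) / (q - p)) has_real_derivative
         (exp (q * x) * q - exp (p * x) * p) / (q - p)) (at x)"
    using False by (auto intro!: derivative_eq_intros)
  moreover have "(exp (q * x) * q - exp (p * x) * p) / (q - p) = q * fundamental p q x + exp (p * x)"
    using False by (simp add: fundamental_def divide_simps) (simp add: algebra_simps)
  ultimately show ?thesis
    using False unfolding fundamental_def fundamental'_def by simp
qed

lemma DERIV_fundamental':
  "(fundamental' p q has_real_derivative q * fundamental' p q x + p * exp (p * x)) (at x)"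
  unfolding fundamental'_def[abs_def]
  by (auto intro!: derivative_eq_intros DERIV_fundamental simp: fundamental'_def algebra_simps)

declare DERIV_fundamental[THEN DERIV_chain2, derivative_intros]
  DERIV_fundamental'[THEN DERIV_chain2, derivative_intros]

lemma fundamental_ode:
  "(q * fundamental' p q x + p * exp (p * x)) - (p + q) * fundamental' p q x
     + p * q * fundamental p q x = 0"
  by (simp add: fundamental'_def algebra_simps)

lemma mono_fundamental:
  assumes "p * q \<le> 0"
  shows "mono (fundamental p q)"
proof (rule monoI)
  fix x y :: real
  assume "x \<le> y"
  then show "fundamental p q x \<le> fundamental p q y"
  proof (rule DERIV_nonneg_imp_nondecreasing)
    fix z
    show "\<exists>d. (fundamental p q has_real_derivative d) (at z) \<and> 0 \<le> d"
      using DERIV_fundamental fundamental'_pos[OF assms] less_imp_le by blast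
  qed
qed

lemma Lop_pair:
  assumes "\<And>t. (u has_real_derivative u' t) (at t)"
    and "\<And>t. (u' has_real_derivative u'' t) (at t)"
  shows "Lop [p, q] u t = u'' t - (p + q) * u' t + p * q * u t"
proof -
  have "deriv u = u'"
    using assms(1) DERIV_imp_deriv by blast
  moreover have "deriv (\<lambda>t. u' t - q * u t) t = u'' t - q * u' t"
    using assms by (intro DERIV_imp_deriv) (auto intro!: derivative_eq_intros)
  ultimately show ?thesis
    by (simp add: Lop_def Lfac_def algebra_simps)
qed

lemma Cn_Suc_iff: "Cn (Suc n) u \<longleftrightarrow> (\<forall>t. u differentiable (at t)) \<and> Cn n (deriv u)"
proof -
  have "(deriv ^^ Suc k) u = (deriv ^^ k) (deriv u)" for k
    by (simp only: funpow_Suc_right comp_apply)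
  then show ?thesis
    unfolding Cn_def All_less_Suc2 by simp
qed

lemma Espace_append_zero:
  "u \<in> Espace (ls @ [0]) \<longleftrightarrow> (\<forall>t. u differentiable (at t)) \<and> deriv u \<in> Espace ls"
  by (simp add: Espace_def Lop_def Lfac_def Cn_Suc_iff)

lemma iterated_deriv_eq:
  assumes "\<And>k t. k < n \<Longrightarrow> (D k has_real_derivative D (Suc k) t) (at t)" and "k \<le> n"
  shows "(deriv ^^ k) (D 0) = D k"
  using assms(2)
proof (induction k)
  case (Suc k)
  then have "(deriv ^^ k) (D 0) = D k"
    by simp
  moreover have "deriv (D k) = D (Suc k)"
    using Suc.prems by (intro ext DERIV_imp_deriv assms(1)) simp
  ultimately show ?case
    by simp
qed simp

lemma CnI:
  assumes "\<And>k t. k < n \<Longrightarrow> (D k has_real_derivative D (Suc k) t) (at t)"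
    and "continuous_on UNIV (D n)"
  shows "Cn n (D 0)"
  using assms iterated_deriv_eq[of n D] by (auto simp: Cn_def real_differentiable_def)

lemma Cn_DERIV_deriv:
  assumes "Cn n u" and "2 \<le> n"
  shows "(u has_real_derivative deriv u t) (at t)"
    and "(deriv u has_real_derivative deriv (deriv u) t) (at t)"
proof -
  have "((deriv ^^ k) u) differentiable (at t)" if "k < 2" for k
    using assms that unfolding Cn_def by auto
  from this[of 0] this[of 1] show "(u has_real_derivative deriv u t) (at t)"
    and "(deriv u has_real_derivative deriv (deriv u) t) (at t)"
    by (simp_all add: DERIV_deriv_iff_real_differentiable)
qed

lemma Espace_pairI:
  assumes u: "\<And>t. (u has_real_derivative u' t) (at t)"
    and u': "\<And>t. (u' has_real_derivative u'' t) (at t)"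
    and ode: "\<And>t. u'' t - (p + q) * u' t + p * q * u t = 0"
  shows "u \<in> Espace [p, q]"
proof -
  have "continuous_on UNIV u" "continuous_on UNIV u'"
    using u u' by (meson DERIV_isCont continuous_at_imp_continuous_on)+
  then have "continuous_on UNIV (\<lambda>t. (p + q) * u' t - p * q * u t)"
    by (intro continuous_intros)
  moreover have "u'' = (\<lambda>t. (p + q) * u' t - p * q * u t)"
    using ode by (auto simp: fun_eq_iff algebra_simps)
  ultimately have "continuous_on UNIV ([u, u', u''] ! 2)"
    by simp
  moreover have "([u, u', u''] ! k has_real_derivative ([u, u', u''] ! Suc k) t) (at t)"
    if "k < 2" for k t
    using that u u' by (cases k) (auto simp: less_Suc_eq)
  ultimately have "Cn 2 u"
    using CnI[of 2 "(!) [u, u', u'']"] by simp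
  then show ?thesis
    using ode by (simp add: Espace_def Lop_pair[OF u u'] numeral_2_eq_2)
qed

lemma Espace_pair_zeroI:
  assumes u: "\<And>t. (u has_real_derivative u' t) (at t)"
    and u': "\<And>t. (u' has_real_derivative u'' t) (at t)"
    and ode: "\<And>t. u'' t - (p + q) * u' t + p * q * u t = c"
  shows "u \<in> Espace [p, q, 0]"
proof -
  have u''_eq: "(\<lambda>t. c + (p + q) * u' t - p * q * u t) = u''"
    using ode by (auto simp: fun_eq_iff algebra_simps)
  have "((\<lambda>t. c + (p + q) * u' t - p * q * u t) has_real_derivative
      (p + q) * u'' t - p * q * u' t) (at t)" for t
    by (auto intro!: derivative_eq_intros u u')
  then have u'': "(u'' has_real_derivative (p + q) * u'' t - p * q * u' t) (at t)" for t
    unfolding u''_eq .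
  have "u' \<in> Espace [p, q]"
    by (rule Espace_pairI[OF u' u'']) (simp add: algebra_simps)
  moreover have "deriv u = u'"
    using u DERIV_imp_deriv by blast
  ultimately show ?thesis
    using Espace_append_zero[of u "[p, q]"] u by (auto simp: real_differentiable_def)
qed

lemma DERIV_scaled_self_imp_exp:
  fixes g :: "real \<Rightarrow> real"
  assumes "\<And>t. (g has_real_derivative c * g t) (at t)"
  shows "g t = g a * exp (c * (t - a))"
proof -
  have "((\<lambda>t. g t * exp (- c * (t - a))) has_real_derivative 0) (at t)" for t
    by (auto intro!: derivative_eq_intros assms simp: algebra_simps)
  then have "g t * exp (- c * (t - a)) = g a * exp (- c * (a - a))"
    by (rule DERIV_isconst_all[rule_format])
  then have "g t * exp (- c * (t - a)) * exp (c * (t - a)) = g a * exp (c * (t - a))"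
    by simp
  then show ?thesis
    by (simp add: mult.assoc flip: exp_add)
qed

lemma pair_homogeneous_solution:
  assumes u: "\<And>t. (u has_real_derivative u' t) (at t)"
    and u': "\<And>t. (u' has_real_derivative u'' t) (at t)"
    and ode: "\<And>t. u'' t - (p + q) * u' t + p * q * u t = 0"
  shows "u t = u a * exp (q * (t - a)) + (u' a - q * u a) * fundamental p q (t - a)"
proof -
  define g where "g s = u' s - q * u s" for s
  have "(g has_real_derivative p * g s) (at s)" for s
  proof -
    have "(g has_real_derivative u'' s - q * u' s) (at s)"
      unfolding g_def by (auto intro!: derivative_eq_intros u u')
    moreover have "u'' s - q * u' s = p * g s"
      using ode[of s] unfolding g_def by (simp add: algebra_simps)
    ultimately show ?thesis
      by simp
  qed
  then have g: "g s = g a * exp (p * (s - a))" for s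
    by (rule DERIV_scaled_self_imp_exp)
  define d where "d s = u s - g a * fundamental p q (s - a)" for s
  have "(d has_real_derivative q * d s) (at s)" for s
  proof -
    have "(d has_real_derivative u' s - g a * (fundamental' p q (s - a) * 1)) (at s)"
      unfolding d_def by (auto intro!: derivative_eq_intros u)
    moreover have "u' s - g a * (fundamental' p q (s - a) * 1) = q * d s"
      using g[of s] unfolding d_def g_def fundamental'_def by (simp add: algebra_simps)
    ultimately show ?thesis
      by simp
  qed
  then have "d t = d a * exp (q * (t - a))"
    by (rule DERIV_scaled_self_imp_exp)
  then show ?thesis
    unfolding d_def g_def by (simp add: algebra_simps)
qed

lemma pair_homogeneous_boundary_zero:
  assumes u: "\<And>t. (u has_real_derivative u' t) (at t)"
    and u': "\<And>t. (u' has_real_derivative u'' t) (at t)"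
    and ode: "\<And>t. u'' t - (p + q) * u' t + p * q * u t = 0"
    and "a < b" "u a = 0" "u b = 0"
  shows "u t = 0"
proof -
  have u_eq: "u s = u' a * fundamental p q (s - a)" for s
    using pair_homogeneous_solution[OF u u' ode, of s a] \<open>u a = 0\<close> by simp
  then have "u' a * fundamental p q (b - a) = 0"
    using \<open>u b = 0\<close> by simp
  then have "u' a = 0"
    using fundamental_pos[of "b - a" p q] \<open>a < b\<close> by simp
  then show ?thesis
    using u_eq by simp
qed

lemma Phi_pair: "Phi [p, q] = fundamental p q"
  unfolding Phi_def
proof (rule the_equality)
  have "fundamental p q \<in> Espace [p, q]"
    by (rule Espace_pairI[OF DERIV_fundamental DERIV_fundamental' fundamental_ode])
  moreover have "deriv (fundamental p q) 0 = 1"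
    using DERIV_imp_deriv[OF DERIV_fundamental] by (simp add: fundamental'_def)
  ultimately show "fundamental p q \<in> Espace [p, q] \<and>
      (\<forall>k<length [p, q] - 1. (deriv ^^ k) (fundamental p q) 0 = 0) \<and>
      (deriv ^^ (length [p, q] - 1)) (fundamental p q) 0 = 1"
    by simp
next
  fix f
  assume f: "f \<in> Espace [p, q] \<and> (\<forall>k<length [p, q] - 1. (deriv ^^ k) f 0 = 0) \<and>
      (deriv ^^ (length [p, q] - 1)) f 0 = 1"
  then have "Cn 2 f" and Lf: "\<And>t. Lop [p, q] f t = 0"
    by (auto simp: Espace_def numeral_2_eq_2)
  note f' = Cn_DERIV_deriv[OF \<open>Cn 2 f\<close> order_refl]
  show "f = fundamental p q"
  proof
    fix t
    show "f t = fundamental p q t"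
      using pair_homogeneous_solution[OF f', of p q t 0] Lf f by (simp add: Lop_pair[OF f'])
  qed
qed

lemma variation_of_parameters:
  assumes y1: "\<And>t. (y1 has_real_derivative y1' t) (at t)"
      "\<And>t. (y1' has_real_derivative y1'' t) (at t)"
      "\<And>t. y1'' t - (p + q) * y1' t + p * q * y1 t = 0"
    and y2: "\<And>t. (y2 has_real_derivative y2' t) (at t)"
      "\<And>t. (y2' has_real_derivative y2'' t) (at t)"
      "\<And>t. y2'' t - (p + q) * y2' t + p * q * y2 t = 0"
    and A: "\<And>t. (A has_real_derivative A' t) (at t)"
    and B: "\<And>t. (B has_real_derivative B' t) (at t)"
    and constraint: "\<And>t. A' t * y1 t + B' t * y2 t = 0"
    and forcing: "\<And>t. A' t * y1' t + B' t * y2' t = c"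
  shows "(\<lambda>t. A t * y1 t + B t * y2 t) \<in> Espace [p, q, 0]"
    and "Lop [p, q] (\<lambda>t. A t * y1 t + B t * y2 t) t = c"
proof -
  define u where "u t = A t * y1 t + B t * y2 t" for t
  have u: "(u has_real_derivative A t * y1' t + B t * y2' t) (at t)" for t
  proof -
    have "(u has_real_derivative A' t * y1 t + A t * y1' t + (B' t * y2 t + B t * y2' t)) (at t)"
      unfolding u_def by (auto intro!: derivative_eq_intros A B y1 y2)
    then show ?thesis
      using constraint[of t] by (simp add: algebra_simps)
  qed
  have u': "((\<lambda>t. A t * y1' t + B t * y2' t) has_real_derivative
      c + A t * y1'' t + B t * y2'' t) (at t)" for t
  proof -
    have "((\<lambda>t. A t * y1' t + B t * y2' t) has_real_derivative
        A' t * y1' t + A t * y1'' t + (B' t * y2' t + B t * y2'' t)) (at t)"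
      by (auto intro!: derivative_eq_intros A B y1 y2)
    then show ?thesis
      using forcing[of t] by (simp add: algebra_simps)
  qed
  have ode: "(c + A t * y1'' t + B t * y2'' t) - (p + q) * (A t * y1' t + B t * y2' t) + p * q * u t = c"
    for t
  proof -
    have "(c + A t * y1'' t + B t * y2'' t) - (p + q) * (A t * y1' t + B t * y2' t) + p * q * u t
        = c + A t * (y1'' t - (p + q) * y1' t + p * q * y1 t)
            + B t * (y2'' t - (p + q) * y2' t + p * q * y2 t)"
      by (simp add: u_def algebra_simps)
    then show ?thesis
      using y1(3) y2(3) by simp
  qed
  show "(\<lambda>t. A t * y1 t + B t * y2 t) \<in> Espace [p, q, 0]"
    using Espace_pair_zeroI[OF u u' ode] by (simp add: u_def[abs_def])
  show "Lop [p, q] (\<lambda>t. A t * y1 t + B t * y2 t) t = c"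
    using Lop_pair[OF u u'] ode by (simp add: u_def[abs_def])
qed

lemma Omega_eqI:
  assumes "a < b" and u: "u \<in> Espace [p, q, 0]" "u a = 0" "u b = 0" "\<And>t. Lop [p, q] u t = -1"
  shows "Omega p q a b = u"
  unfolding Omega_def
proof (rule the_equality)
  show "u \<in> Espace [p, q, 0] \<and> u a = 0 \<and> u b = 0 \<and> (\<forall>t. Lop [p, q] u t = - 1)"
    using u by blast
next
  fix v
  assume v: "v \<in> Espace [p, q, 0] \<and> v a = 0 \<and> v b = 0 \<and> (\<forall>t. Lop [p, q] v t = - 1)"
  have derivs: "(f has_real_derivative deriv f t) (at t)"
      "(deriv f has_real_derivative deriv (deriv f) t) (at t)"
    if "f \<in> Espace [p, q, 0]" for f t
    using Cn_DERIV_deriv[of 3 f] that by (auto simp: Espace_def numeral_3_eq_3)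
  have Lop_eq: "Lop [p, q] f t = deriv (deriv f) t - (p + q) * deriv f t + p * q * f t"
    if "f \<in> Espace [p, q, 0]" for f t
    using Lop_pair[OF derivs[OF that]] .
  have "v t - u t = 0" for t
  proof (rule pair_homogeneous_boundary_zero[where u = "\<lambda>t. v t - u t"
        and u' = "\<lambda>t. deriv v t - deriv u t"
        and u'' = "\<lambda>t. deriv (deriv v) t - deriv (deriv u) t"])
    show "((\<lambda>t. v t - u t) has_real_derivative deriv v t - deriv u t) (at t)" for t
      using derivs v u by (auto intro!: derivative_eq_intros)
    show "((\<lambda>t. deriv v t - deriv u t) has_real_derivative
        deriv (deriv v) t - deriv (deriv u) t) (at t)" for t
      using derivs v u by (auto intro!: derivative_eq_intros)
    show "(deriv (deriv v) t - deriv (deriv u) t) - (p + q) * (deriv v t - deriv u t)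
        + p * q * (v t - u t) = 0" for t
      using Lop_eq[of v t] Lop_eq[of u t] v u by (simp add: algebra_simps)
  qed (use \<open>a < b\<close> u v in auto)
  then show "v = u"
    by auto
qed

lemma Omega_closed_form:
  assumes "a < b"
    and Psi: "\<And>x. (Psi has_real_derivative fundamental (-p) (-q) x) (at x)" "Psi 0 = 0"
    and Xi: "\<And>x. (Xi has_real_derivative fundamental p q x) (at x)" "Xi 0 = 0"
  shows "Omega p q a b t =
    (fundamental (-p) (-q) (b - t) * Psi (t - a)
       + exp (-(p + q) * (b - a)) * fundamental p q (t - a) * Xi (b - t))
    / fundamental (-p) (-q) (b - a)"
proof -
  define F where "F = fundamental (-p) (-q)"
  define D where "D = F (b - a)"
  define K where "K = exp (-(p + q) * (b - a))"
  have "D > 0"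
    using fundamental_pos \<open>a < b\<close> by (simp add: D_def F_def)
  have shift: "((\<lambda>t. fundamental p q (t - s)) has_real_derivative fundamental' p q (t - s)) (at t)"
      "((\<lambda>t. fundamental' p q (t - s)) has_real_derivative
         q * fundamental' p q (t - s) + p * exp (p * (t - s))) (at t)"
      "(q * fundamental' p q (t - s) + p * exp (p * (t - s))) - (p + q) * fundamental' p q (t - s)
         + p * q * fundamental p q (t - s) = 0" for s t
    by (auto intro!: derivative_eq_intros simp: fundamental_ode)
  have A: "((\<lambda>t. - Psi (t - a) / D) has_real_derivative - F (t - a) / D) (at t)" for t
    using \<open>D > 0\<close> by (auto intro!: derivative_eq_intros DERIV_chain2[OF Psi(1)] simp: F_def)
  have B: "((\<lambda>t. K * Xi (b - t) / D) has_real_derivative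
      - K * fundamental p q (b - t) / D) (at t)" for t
    using \<open>D > 0\<close> by (auto intro!: derivative_eq_intros DERIV_chain2[OF Xi(1)])
  have flip: "fundamental p q (t - b) = - F (b - t)" and sum: "t - a + (b - t) = b - a" for t
    using fundamental_minus[of p q "b - t"] by (simp_all add: F_def)
  (* Cramer's rule for A' and B': the Wronskian of fundamental p q (t - b) and
     fundamental p q (t - a) is - D * exp ((p + q) * (t - a)). *)
  have "- F (t - a) / D * fundamental p q (t - b)
      + - K * fundamental p q (b - t) / D * fundamental p q (t - a) = 0" for t
    using fundamental_uminus_params_mult[of p q "t - a" "b - t"] \<open>D > 0\<close>
    by (simp add: flip sum F_def K_def field_simps)
  moreover have "- F (t - a) / D * fundamental' p q (t - b)
      + - K * fundamental p q (b - t) / D * fundamental' p q (t - a) = -1" for t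
    using fundamental_wronskian[of p q "b - t" "t - a"] \<open>D > 0\<close>
    by (simp add: sum F_def D_def K_def field_simps)
  ultimately have "Omega p q a b = (\<lambda>t. - Psi (t - a) / D * fundamental p q (t - b)
      + K * Xi (b - t) / D * fundamental p q (t - a))"
    using variation_of_parameters[OF shift[where s = b] shift[where s = a] A B]
      Psi(2) Xi(2) \<open>a < b\<close>
    by (intro Omega_eqI) auto
  then show ?thesis
    using flip[of t] \<open>D > 0\<close> by (simp add: F_def D_def K_def field_simps)
qed

lemma Gdiag_eq:
  "Gdiag p q a b t = - fundamental (-p) (-q) (b - t) * fundamental (-p) (-q) (t - a)
     / fundamental (-p) (-q) (b - a)"
  using fundamental_minus[of p q "b - t"] by (simp add: Gdiag_def Phi_pair)

lemma continuous_imp_antiderivative: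
  fixes f :: "real \<Rightarrow> real"
  assumes "\<And>x. isCont f x"
  obtains G where "G 0 = 0" and "\<And>x. (G has_real_derivative f x) (at x)"
proof -
  obtain F where
    "\<forall>x::real. -\<infinity> < ereal x \<longrightarrow> ereal x < \<infinity> \<longrightarrow> (F has_vector_derivative f x) (at x)"
    using einterval_antiderivative[of "-\<infinity>" "\<infinity>" f] assms by auto
  then have "(F has_real_derivative f x) (at x)" for x
    by (simp add: has_real_derivative_iff_has_vector_derivative)
  then have "((\<lambda>x. F x - F 0) has_real_derivative f x) (at x)" for x
    by (auto intro!: derivative_eq_intros)
  then show thesis
    by (intro that[of "\<lambda>x. F x - F 0"]) auto
qed

lemma diff_le_of_DERIV_le:
  fixes G g :: "real \<Rightarrow> real"
  assumes "a \<le> x"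
    and "\<And>s. a \<le> s \<Longrightarrow> s \<le> x \<Longrightarrow> (G has_real_derivative g s) (at s)"
    and "\<And>s. a \<le> s \<Longrightarrow> s \<le> x \<Longrightarrow> g s \<le> g x"
  shows "G x - G a \<le> (x - a) * g x"
proof (cases "a = x")
  case False
  then obtain z where "a < z" "z < x" "G x - G a = (x - a) * g z"
    using MVT2[of a x G g] assms(1,2) by auto
  then show ?thesis
    using assms(3)[of z] by (simp add: mult_left_mono)
qed simp

lemma mono_antiderivative_le:
  fixes g :: "real \<Rightarrow> real"
  assumes "mono g" and "\<And>x. isCont g x"
  obtains G where "G 0 = 0" and "\<And>x. (G has_real_derivative g x) (at x)"
    and "\<And>x. 0 \<le> x \<Longrightarrow> G x \<le> x * g x"
proof -
  obtain G where G: "G 0 = 0" "\<And>x. (G has_real_derivative g x) (at x)"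
    using continuous_imp_antiderivative assms(2) by blast
  moreover have "G x \<le> x * g x" if "0 \<le> x" for x
    using diff_le_of_DERIV_le[of 0 x G g] G that \<open>mono g\<close> by (auto dest: monoD)
  ultimately show thesis
    by (rule that)
qed

theorem mainTheorem6:
  fixes l0 l1 a b t :: real
  assumes "l0 \<le> 0" and "0 \<le> l1" and "a < b" and "t \<in> {a..b}"
  shows "Omega l0 l1 a b t \<le> (b - a) * \<bar>Gdiag l0 l1 a b t\<bar>"
proof -
  define F where "F = fundamental (-l0) (-l1)"
  define f where "f = fundamental l0 l1"
  define x where "x = t - a"
  define y where "y = b - t"
  have "x \<ge> 0" "y \<ge> 0" "x + y = b - a"
    using assms(4) by (auto simp: x_def y_def)
  have "l0 * l1 \<le> 0"
    using assms(1,2) by (simp add: mult_nonpos_nonneg)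
  then have "mono F" "mono f"
    using mono_fundamental[of "-l0" "-l1"] mono_fundamental[of l0 l1] by (simp_all add: F_def f_def)
  have "isCont F s" "isCont f s" for s
    unfolding F_def f_def by (rule DERIV_isCont[OF DERIV_fundamental])+
  obtain Psi where Psi: "Psi 0 = 0" "\<And>s. (Psi has_real_derivative F s) (at s)"
    "\<And>s. 0 \<le> s \<Longrightarrow> Psi s \<le> s * F s"
    by (rule mono_antiderivative_le[OF \<open>mono F\<close> \<open>\<And>s. isCont F s\<close>]) blast
  obtain Xi where Xi: "Xi 0 = 0" "\<And>s. (Xi has_real_derivative f s) (at s)"
    "\<And>s. 0 \<le> s \<Longrightarrow> Xi s \<le> s * f s"
    by (rule mono_antiderivative_le[OF \<open>mono f\<close> \<open>\<And>s. isCont f s\<close>]) blast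
  have "Omega l0 l1 a b t = (F y * Psi x + exp (-(l0 + l1) * (x + y)) * f x * Xi y) / F (x + y)"
    using Omega_closed_form[OF \<open>a < b\<close> Psi(2,1)[unfolded F_def] Xi(2,1)[unfolded f_def]]
    by (simp add: F_def f_def x_def y_def)
  also have "\<dots> \<le> (F y * (x * F x) + exp (-(l0 + l1) * (x + y)) * f x * (y * f y)) / F (x + y)"
    using Psi(3)[OF \<open>x \<ge> 0\<close>] Xi(3)[OF \<open>y \<ge> 0\<close>] \<open>x \<ge> 0\<close> \<open>y \<ge> 0\<close>
    by (intro divide_right_mono add_mono mult_left_mono) (auto simp: F_def f_def fundamental_nonneg)
  also have "\<dots> = (x + y) * (F x * F y) / F (x + y)"
    using fundamental_uminus_params_mult[of l0 l1 x y] by (simp add: F_def f_def algebra_simps)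
  also have "\<dots> = (b - a) * \<bar>Gdiag l0 l1 a b t\<bar>"
    using \<open>x \<ge> 0\<close> \<open>y \<ge> 0\<close> \<open>x + y = b - a\<close>
    by (simp add: Gdiag_eq F_def x_def y_def abs_mult fundamental_nonneg)
  finally show ?thesis .
qed

end
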